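(* Let $n\ge 1$, let $\mathbf{F}=(f_{ij})$ be an $n\times n$ matrix with nonnegative entries ($f_{ij}$ is the flow from node $j$ to node $i$), let $\vec z=(z_1,\dots,z_n)^{\mathrm T}$ be a nonnegative column vector of boundary inputs and $\vec y=(y_1,\dots,y_n)$ a nonnegative row vector of boundary outputs. Define $T^{\mathrm{in}}_i=\sum_{j=1}^n f_{ij}+z_i$ and $T^{\mathrm{out}}_j=\sum_{i=1}^n f_{ij}+y_j$, assume all of these are positive, and assume the system is at steady state, i.e. $T^{\mathrm{in}}_\ell=T^{\mathrm{out}}_\ell$ for every $\ell$. Let $\mathbf{G}'=(g'_{ij})$ with $g'_{ij}=f_{ij}/T^{\mathrm{in}}_i$ and $\mathbf{G}=(g_{ij})$ with $g_{ij}=f_{ij}/T^{\mathrm{out}}_j$, and assume the series $\mathbf{N}'=\sum_{m\ge0}\mathbf{G}'^m=(\mathbf I-\mathbf G')^{-1}$ and $\mathbf{N}=\sum_{m\ge0}\mathbf{G}^m=(\mathbf I-\mathbf G)^{-1}$ converge. Then the realized input ratio $$I/D_{\mathrm{realized,input}}=\frac{\sum_{i=1}^n\bigl(\vec y(\mathbf N'-\mathbf I-\mathbf G')\bigr)_i}{\sum_{i=1}^n(\vec y\mathbf G')_i}$$ and the realized output ratio $$I/D_{\mathrm{realized,output}}=\frac{\sum_{i=1}^n\bigl((\mathbf N-\mathbf I-\mathbf G)\vec z\bigr)_i}{\sum_{i=1}^n(\mathbf G\vec z)_i}$$ are identical.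
   Context: This is the setting of ecological network (throughflow) analysis: nodes are ecosystem compartments, $\mathbf I$ is the $n\times n$ identity matrix. $\mathbf G'$ and $\mathbf G$ are the input- and output-oriented direct flow intensity matrices, and $\mathbf N'$, $\mathbf N$ the corresponding integral flow intensity matrices; in the model setting the paper takes the power series defining them to converge. The ratios compare indirect flow (terms $m\ge2$ of the series) to direct flow (term $m=1$), weighted by the observed boundary vectors. *)

theory Defs
  imports "HOL-Analysis.Analysis"
begin

fun matpow :: "real^'n^'n \<Rightarrow> nat \<Rightarrow> real^'n^'n" where
  "matpow A 0 = mat 1"
| "matpow A (Suc m) = A ** matpow A m"

definition vsum :: "real^'n \<Rightarrow> real" where
  "vsum v = (\<Sum>i\<in>UNIV. v $ i)"

end

theory Submission
  imports Defs
begin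

text \<open>With \<open>t\<close> the common throughflow vector and \<open>D = diag t\<close>, the two flow intensity
  matrices are similar, \<open>G' = D\<^sup>-\<^sup>1 G D\<close>. Steady state says \<open>z = (I - G) t\<close> and
  \<open>y D\<^sup>-\<^sup>1 = 1 (I - G)\<close>, so both \<open>y G'\<^sup>m 1\<close> and \<open>1 G\<^sup>m z\<close> equal \<open>1 (G\<^sup>m - G\<^sup>m\<^sup>+\<^sup>1) t\<close>,
  because \<open>G\<^sup>m\<close> commutes with \<open>I - G\<close>. The two weighted sums of the series therefore agree
  term by term, and so do their indirect and direct parts.\<close>

lemma vsum_eq_inner_one: "vsum v = 1 \<bullet> v"
  by (simp add: vsum_def inner_vec_def)

lemma vsum_vector_matrix_mult: "vsum (x v* A) = x \<bullet> (A *v 1)"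
  by (metis vsum_eq_inner_one inner_commute dot_lmul_matrix)

lemma bounded_linear_inner_matrix_vector_mult:
  "bounded_linear (\<lambda>A::real^'n^'m. u \<bullet> (A *v w))"
proof -
  have "linear (\<lambda>A::real^'n^'m. u \<bullet> (A *v w))"
    by (rule linearI) (simp_all add: matrix_vector_mult_add_rdistrib inner_add_right
        scaleR_matrix_vector_assoc[symmetric])
  then show ?thesis
    by (simp add: linear_conv_bounded_linear)
qed

lemma matpow_commute: "A ** matpow A m = matpow A m ** A"
  by (induction m) (simp_all, metis matrix_mul_assoc)

lemma inner_one_minus_matpow:
  "(x v* (mat 1 - A)) \<bullet> (matpow A m *v w) = x \<bullet> (matpow A m *v ((mat 1 - A) *v w))"
proof -
  have "A *v (matpow A m *v w) = matpow A m *v (A *v w)"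
    by (simp add: matrix_vector_mul_assoc matpow_commute)
  then show ?thesis
    by (simp add: dot_lmul_matrix matrix_vector_mult_diff_rdistrib matrix_vector_mult_diff_distrib)
qed

lemma matpow_diagonal_similarity:
  assumes "\<And>i. t $ i \<noteq> 0"
  shows "matpow (\<chi> i j. A $ i $ j * t $ j / t $ i) m = (\<chi> i j. matpow A m $ i $ j * t $ j / t $ i)"
proof (induction m)
  case 0
  show ?case
    using assms by (simp add: mat_def vec_eq_iff)
next
  case (Suc m)
  have "(\<Sum>k\<in>UNIV. A $ i $ k * t $ k / t $ i * (matpow A m $ k $ j * t $ j / t $ k))
      = (\<Sum>k\<in>UNIV. A $ i $ k * matpow A m $ k $ j) * t $ j / t $ i" for i j
    unfolding sum_distrib_right sum_divide_distrib
    by (rule sum.cong) (use assms in auto)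
  then show ?case
    by (simp add: Suc matrix_matrix_mult_def vec_eq_iff)
qed

lemma vsum_vector_matrix_diagonal_similarity:
  "vsum (y v* (\<chi> i j. B $ i $ j * t $ j / t $ i)) = (\<chi> i. y $ i / t $ i) \<bullet> (B *v t)"
  unfolding vsum_def inner_vec_def vector_matrix_mult_def matrix_vector_mult_def
  by (simp add: sum_distrib_left) (subst sum.swap, simp add: mult_ac)

lemma indirect_direct_ratios_eq:
  fixes G' G :: "real^'n^'n"
  assumes terms: "\<And>m. vsum (y v* matpow G' m) = vsum (matpow G m *v z)"
    and "summable (\<lambda>m. matpow G' m)" and "summable (\<lambda>m. matpow G m)"
  shows "vsum (y v* ((\<Sum>m. matpow G' m) - mat 1 - G')) / vsum (y v* G')
       = vsum (((\<Sum>m. matpow G m) - mat 1 - G) *v z) / vsum (G *v z)"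
proof -
  have f: "bounded_linear (\<lambda>A::real^'n^'n. vsum (y v* A))"
    unfolding vsum_vector_matrix_mult by (rule bounded_linear_inner_matrix_vector_mult)
  have g: "bounded_linear (\<lambda>A::real^'n^'n. vsum (A *v z))"
    unfolding vsum_eq_inner_one by (rule bounded_linear_inner_matrix_vector_mult)
  have "vsum (y v* (\<Sum>m. matpow G' m)) = vsum ((\<Sum>m. matpow G m) *v z)"
    using bounded_linear.suminf[OF f assms(2)] bounded_linear.suminf[OF g assms(3)] terms
    by simp
  moreover have "vsum (y v* mat 1) = vsum (mat 1 *v z)" and "vsum (y v* G') = vsum (G *v z)"
    using terms[of 0] terms[of 1] by simp_all
  ultimately show ?thesis
    using linear_diff[OF bounded_linear.linear[OF f]] linear_diff[OF bounded_linear.linear[OF g]]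
    by simp
qed

lemma vsum_matpow_similar_eq:
  assumes "\<And>i. t $ i \<noteq> 0"
    and "G' = (\<chi> i j. G $ i $ j * t $ j / t $ i)"
    and "(\<chi> i. y $ i / t $ i) = 1 v* (mat 1 - G)"
    and "z = (mat 1 - G) *v t"
  shows "vsum (y v* matpow G' m) = vsum (matpow G m *v z)"
proof -
  have "vsum (y v* matpow G' m) = (\<chi> i. y $ i / t $ i) \<bullet> (matpow G m *v t)"
    by (simp add: assms(2) matpow_diagonal_similarity[OF assms(1)]
        vsum_vector_matrix_diagonal_similarity)
  also have "\<dots> = 1 \<bullet> (matpow G m *v z)"
    by (simp add: assms(3,4) inner_one_minus_matpow)
  finally show ?thesis
    by (simp add: vsum_eq_inner_one)
qed

theorem theorem1:
  fixes F :: "real^'n^'n" and z :: "real^'n" and y :: "real^'n"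
    and Tin Tout :: "'n \<Rightarrow> real" and G' G N' N :: "real^'n^'n"
  assumes F_nonneg: "\<And>i j. F $ i $ j \<ge> 0"
    and z_nonneg: "\<And>i. z $ i \<ge> 0"
    and y_nonneg: "\<And>i. y $ i \<ge> 0"
    and Tin_def: "\<And>i. Tin i = (\<Sum>j\<in>UNIV. F $ i $ j) + z $ i"
    and Tout_def: "\<And>j. Tout j = (\<Sum>i\<in>UNIV. F $ i $ j) + y $ j"
    and Tin_pos: "\<And>i. Tin i > 0"
    and Tout_pos: "\<And>j. Tout j > 0"
    and steady: "\<And>l. Tin l = Tout l"
    and G'_def: "G' = (\<chi> i j. F $ i $ j / Tin i)"
    and G_def: "G = (\<chi> i j. F $ i $ j / Tout j)"
    and conv': "summable (\<lambda>m. matpow G' m)"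
    and conv: "summable (\<lambda>m. matpow G m)"
    and N'_def: "N' = (\<Sum>m. matpow G' m)"
    and N_def: "N = (\<Sum>m. matpow G m)"
  shows "vsum (y v* (N' - mat 1 - G')) / vsum (y v* G')
       = vsum ((N - mat 1 - G) *v z) / vsum (G *v z)"
proof -
  define t :: "real^'n" where "t = (\<chi> i. Tin i)"
  have t_nonzero: "t $ i \<noteq> 0" for i
    using Tin_pos[of i] by (simp add: t_def)
  have G_entry: "G $ i $ j = F $ i $ j / t $ j" for i j
    by (simp add: G_def t_def steady)
  have G'_similar: "G' = (\<chi> i j. G $ i $ j * t $ j / t $ i)"
    using t_nonzero by (simp add: G'_def G_entry t_def vec_eq_iff)
  have y_scaled: "(\<chi> i. y $ i / t $ i) = 1 v* (mat 1 - G)"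
  proof -
    have "y $ j / t $ j = 1 - (\<Sum>i\<in>UNIV. G $ i $ j)" for j
      using Tout_def[of j] steady[of j] t_nonzero[of j]
      by (simp add: G_entry t_def sum_divide_distrib[symmetric] field_simps)
    then show ?thesis
      unfolding vector_matrix_mult_diff_rdistrib vector_matrix_mul_rid
      by (simp add: vector_matrix_mult_def vec_eq_iff)
  qed
  have z_eq: "z = (mat 1 - G) *v t"
  proof -
    have "(\<Sum>j\<in>UNIV. G $ i $ j * t $ j) = (\<Sum>j\<in>UNIV. F $ i $ j)" for i
      using t_nonzero by (simp add: G_entry)
    then show ?thesis
      unfolding matrix_vector_mult_diff_rdistrib matrix_vector_mul_lid
      by (simp add: matrix_vector_mult_def vec_eq_iff Tin_def t_def)
  qed
  have "vsum (y v* matpow G' m) = vsum (matpow G m *v z)" for m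
    using t_nonzero G'_similar y_scaled z_eq by (rule vsum_matpow_similar_eq)
  then show ?thesis
    unfolding N'_def N_def by (rule indirect_direct_ratios_eq[OF _ conv' conv])
qed

end
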